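(* For every $Q \in \mathrm{O}(n)$, \[ \lim_{\varepsilon\to0}\|f^{Qe_n}_\varepsilon\|_{L^1(\mathbb{S}^{n-1})} = \int_{\mathbb{R}^{n-1}}\chi(\eta, -|\eta|^2/2)\,d\eta. \] Furthermore, there exists a constant $C>0$, depending only on $n$ (and the fixed function $\chi$), such that $\|f^{Qe_n}_\varepsilon\|_{L^2(\mathbb{S}^{n-1})} \leq C\varepsilon^{-(n-1)/2}$ for all $\varepsilon\in(0,1]$ and all $Q\in\mathrm{O}(n)$.
   Context: Fix $\chi \in C_c^\infty(\mathbb{R}^n)$ with $0\le\chi\le1$ and $\operatorname{supp}\chi \subset \{\xi\in\mathbb{R}^n : |\xi|<1/2\}$. Write $\xi = (\xi', \xi_n)$ with $\xi'\in\mathbb{R}^{n-1}$, $\xi_n = \xi\cdot e_n$, where $e_1,\dots,e_n$ is the standard basis. For $\varepsilon>0$ define $\chi_\varepsilon(\xi) = \varepsilon^{-(n-1)}\chi(\xi'/\varepsilon, (\xi_n-1)/\varepsilon^2)$ and $f^{e_n}_\varepsilon = \chi_\varepsilon|_{\mathbb{S}^{n-1}}$; for $Q\in\mathrm{O}(n)$ define $f^{Qe_n}_\varepsilon(\theta) = f^{e_n}_\varepsilon(Q^{\mathsf T}\theta)$, $\theta\in\mathbb{S}^{n-1}$. Norms on $\mathbb{S}^{n-1}$ are with respect to surface measure. *)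

theory Defs
  imports "HOL-Analysis.Analysis"
begin

fun Ck :: "nat \<Rightarrow> ('a::euclidean_space \<Rightarrow> real) \<Rightarrow> bool" where
  "Ck 0 f = continuous_on UNIV f"
| "Ck (Suc k) f = ((\<forall>x. f differentiable (at x)) \<and>
      (\<forall>v. Ck k (\<lambda>x. frechet_derivative f (at x) v)))"

definition smooth_fun :: "('a::euclidean_space \<Rightarrow> real) \<Rightarrow> bool" where
  "smooth_fun f \<longleftrightarrow> (\<forall>k. Ck k f)"

text \<open>Surface measure on the unit sphere of a Euclidean space of dimension d,
defined by polar coordinates (cone measure):
sigma(A) = d * lebesgue-measure of the cone {r x | 0 < r <= 1, x in A}, realised
as d times the push-forward of Lebesgue measure on the unit ball under x / |x|.
(The single point 0 is a null set.)\<close>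
definition sphere_measure :: "('a::euclidean_space) measure" where
  "sphere_measure = distr (density lborel (\<lambda>x. ennreal (real DIM('a)) * indicator (ball 0 1) x))
      borel (\<lambda>x. x /\<^sub>R norm x)"

text \<open>R^n is modelled as 'a \<times> real with 'a = R^(n-1); e_n = (0,1).
chi_eps(xi) = eps^-(n-1) chi(xi'/eps, (xi_n - 1)/eps^2).\<close>
definition chi_eps :: "('a::euclidean_space \<times> real \<Rightarrow> real) \<Rightarrow> real \<Rightarrow> 'a \<times> real \<Rightarrow> real" where
  "chi_eps chi eps xi = eps powr (- real DIM('a)) *
      chi (fst xi /\<^sub>R eps, (snd xi - 1) / eps^2)"

definition f_eps :: "('a::euclidean_space \<times> real \<Rightarrow> real) \<Rightarrow> real \<Rightarrow>
    ('a \<times> real \<Rightarrow> 'a \<times> real) \<Rightarrow> 'a \<times> real \<Rightarrow> real" where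
  "f_eps chi eps Q th = chi_eps chi eps (adjoint Q th)"

end

theory Submission
  imports Defs
begin

text \<open>
  Rotation invariance of the surface measure reduces both claims to \<open>Q = id\<close>. For
  \<open>eps \<le> 1\<close> the function \<open>chi_eps\<close> vanishes on the lower half space, so its integral over the
  sphere can be computed in the gnomonic chart \<open>u \<mapsto> sgn (u, 1)\<close> of the upper hemisphere,
  whose Jacobian is \<open><u>^-n\<close> with \<open><u> = |(u, 1)|\<close> (\<open>japanese_bracket\<close>). After the parabolic
  rescaling \<open>u = eps v\<close>, whose Jacobian \<open>eps^(n-1)\<close> cancels the normalisation of \<open>chi_eps\<close>,
  the integral of \<open>f_eps\<close> becomes \<open>\<integral> chi (P_eps v) <eps v>^-n dv\<close> (\<open>chart_density\<close>), where
  \<open>P_eps v = (v / <eps v>, (1 / <eps v> - 1) / eps^2)\<close> (\<open>parabolic_chart\<close>) tends to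
  \<open>(v, -|v|^2 / 2)\<close>. Because \<open>chi\<close> is supported in the ball of radius \<open>1/2\<close>, this density is
  dominated by the indicator of the unit ball, and dominated convergence gives the \<open>L^1\<close> limit.
  For the \<open>L^2\<close> bound, \<open>0 \<le> f_eps \<le> eps^-(n-1)\<close> gives
  \<open>|f_eps|_2^2 \<le> eps^-(n-1) |f_eps|_1 \<le> eps^-(n-1) |B_1|\<close>.
\<close>

section \<open>Lebesgue measure is invariant under orthogonal transformations\<close>

text \<open>The library proves this only on \<open>real ^ 'n\<close> for a well-ordered finite index type \<open>'n\<close>;
  indexing coordinates by the basis carries it over to every Euclidean space.\<close>

typedef (overloaded) ('a::euclidean_space) basis_index = "Basis :: 'a set"
  morphisms basis_vector Abs_basis_index
  using nonempty_Basis by blast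

instance basis_index :: (euclidean_space) finite
proof
  show "finite (UNIV :: 'a basis_index set)"
    by (metis type_definition.Abs_image[OF type_definition_basis_index] finite_Basis finite_imageI)
qed

instantiation basis_index :: (euclidean_space) linorder
begin
definition less_eq_basis_index :: "'a basis_index \<Rightarrow> 'a basis_index \<Rightarrow> bool"
  where "less_eq_basis_index i j \<longleftrightarrow> to_nat i \<le> to_nat j"
definition less_basis_index :: "'a basis_index \<Rightarrow> 'a basis_index \<Rightarrow> bool"
  where "less_basis_index i j \<longleftrightarrow> to_nat i < to_nat j"
instance
  by standard (auto simp: less_eq_basis_index_def less_basis_index_def inj_eq)
end

instance basis_index :: (euclidean_space) wellorder
proof
  fix P :: "'a basis_index \<Rightarrow> bool" and i
  assume step: "\<And>i. (\<And>j. j < i \<Longrightarrow> P j) \<Longrightarrow> P i"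
  show "P i"
    by (induct i rule: measure_induct_rule[where f = to_nat]) (rule step, simp add: less_basis_index_def)
qed

lemma bij_basis_vector: "bij_betw basis_vector UNIV (Basis :: 'a::euclidean_space set)"
  by (metis bij_betw_def inj_on_def basis_vector_inject type_definition.Rep_range
      type_definition_basis_index)

lemma range_basis_vector: "range basis_vector = (Basis :: 'a::euclidean_space set)"
  by (rule type_definition.Rep_range[OF type_definition_basis_index])

definition basis_coords :: "'a::euclidean_space \<Rightarrow> real ^ 'a basis_index"
  where "basis_coords x = (\<chi> i. x \<bullet> basis_vector i)"

definition from_basis_coords :: "real ^ 'a basis_index \<Rightarrow> 'a::euclidean_space"
  where "from_basis_coords y = (\<Sum>i\<in>UNIV. y $ i *\<^sub>R basis_vector i)"

lemma from_basis_coords_basis_coords [simp]: "from_basis_coords (basis_coords x) = x"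
  using sum.reindex_bij_betw[OF bij_basis_vector, of "\<lambda>b. (x \<bullet> b) *\<^sub>R b"]
  by (simp add: from_basis_coords_def basis_coords_def euclidean_representation)

lemma inner_from_basis_coords_basis_vector [simp]: "from_basis_coords y \<bullet> basis_vector j = y $ j"
proof -
  have "from_basis_coords y \<bullet> basis_vector j = (\<Sum>i\<in>UNIV. if i = j then y $ i else 0)"
    unfolding from_basis_coords_def inner_sum_left
    by (intro sum.cong refl) (simp add: inner_Basis basis_vector basis_vector_inject)
  then show ?thesis by simp
qed

lemma basis_coords_from_basis_coords [simp]: "basis_coords (from_basis_coords y) = y"
  by (simp add: basis_coords_def vec_eq_iff)

lemma linear_basis_coords: "linear basis_coords"
  by (rule linearI) (simp_all add: basis_coords_def vec_eq_iff inner_add_left)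

lemma linear_from_basis_coords: "linear from_basis_coords"
  by (rule linearI) (simp_all add: from_basis_coords_def scaleR_add_left sum.distrib scaleR_sum_right)

lemma inner_basis_coords [simp]: "basis_coords x \<bullet> basis_coords y = x \<bullet> y"
  using sum.reindex_bij_betw[OF bij_basis_vector, of "\<lambda>b. (x \<bullet> b) * (y \<bullet> b)"]
  by (simp add: basis_coords_def inner_vec_def euclidean_inner[of x y])

lemma inner_from_basis_coords [simp]: "from_basis_coords x \<bullet> from_basis_coords y = x \<bullet> y"
  by (metis basis_coords_from_basis_coords inner_basis_coords)

lemma borel_measurable_linear:
  fixes f :: "'a::euclidean_space \<Rightarrow> 'b::euclidean_space"
  assumes "linear f"
  shows "f \<in> borel_measurable borel"
  by (rule borel_measurable_continuous_onI, rule linear_continuous_on)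
    (simp add: assms linear_conv_bounded_linear[symmetric])

lemma lborel_distr_basis_coords: "distr lborel borel (basis_coords :: 'a::euclidean_space \<Rightarrow> _) = lborel"
proof (rule lborel_eqI[symmetric])
  fix l u :: "real ^ 'a basis_index"
  assume le_Basis: "\<And>b. b \<in> Basis \<Longrightarrow> l \<bullet> b \<le> u \<bullet> b"
  have le: "l $ i \<le> u $ i" for i
    using le_Basis[of "axis i 1"] by (auto simp: cart_eq_inner_axis Basis_vec_def)
  have "x \<in> box (from_basis_coords l) (from_basis_coords u)
      \<longleftrightarrow> (\<forall>i. l $ i < x \<bullet> basis_vector i \<and> x \<bullet> basis_vector i < u $ i)" for x :: 'a
    unfolding mem_box range_basis_vector[symmetric] by simp
  then have "basis_coords -` box l u = box (from_basis_coords l) (from_basis_coords u :: 'a)"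
    by (auto simp: mem_box_cart basis_coords_def)
  then have "emeasure (distr lborel borel basis_coords) (box l u)
      = (\<Prod>b\<in>Basis. (from_basis_coords u - from_basis_coords l :: 'a) \<bullet> b)"
    using le
    by (simp add: emeasure_distr borel_measurable_linear[OF linear_basis_coords]
        emeasure_lborel_box_eq range_basis_vector[symmetric] inner_diff_left)
  also have "\<dots> = (\<Prod>i\<in>UNIV. (u - l) $ i)"
    using prod.reindex_bij_betw[OF bij_basis_vector,
        of "\<lambda>b. (from_basis_coords u - from_basis_coords l :: 'a) \<bullet> b"]
    by (simp add: inner_diff_left)
  also have "\<dots> = (\<Prod>b\<in>Basis. (u - l) \<bullet> b)"
    by (simp add: Basis_vec_def cart_eq_inner_axis axis_eq_axis prod.UNION_disjoint)
  finally show "emeasure (distr lborel borel basis_coords) (box l u)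
      = (\<Prod>b\<in>Basis. (u - l) \<bullet> b)" .
qed simp

lemma lborel_distr_orthogonal_transformation_cart:
  fixes f :: "real ^ 'n::{finite,wellorder} \<Rightarrow> real ^ 'n::_"
  assumes f: "orthogonal_transformation f"
  shows "distr lborel borel f = lborel"
proof (rule lborel_eqI[symmetric])
  fix l u :: "real ^ 'n::{finite,wellorder}"
  assume le: "\<And>b. b \<in> Basis \<Longrightarrow> l \<bullet> b \<le> u \<bullet> b"
  have f_meas: "f \<in> borel_measurable borel"
    by (rule borel_measurable_linear[OF orthogonal_transformation_linear[OF f]])
  have preimage: "f -` box l u = inv f ` box l u"
    by (rule bij_vimage_eq_inv_image[OF orthogonal_transformation_bij[OF f]])
  have inv_f: "orthogonal_transformation (inv f)"
    by (rule orthogonal_transformation_inv[OF f])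
  have "emeasure (distr lborel borel f) (box l u) = emeasure lebesgue (f -` box l u)"
    using f_meas by (simp add: emeasure_distr measurable_sets_borel)
  also have "\<dots> = measure lebesgue (box l u)"
    unfolding preimage
    by (simp add: emeasure_eq_measure2 measurable_orthogonal_image[OF inv_f] measure_orthogonal_image[OF inv_f])
  also have "\<dots> = (\<Prod>b\<in>Basis. (u - l) \<bullet> b)"
    using le by (simp add: measure_lborel_box_eq)
  finally show "emeasure (distr lborel borel f) (box l u) = (\<Prod>b\<in>Basis. (u - l) \<bullet> b)" .
qed simp

lemma lborel_distr_from_basis_coords: "distr lborel borel (from_basis_coords :: _ \<Rightarrow> 'a::euclidean_space) = lborel"
proof -
  have "distr lborel borel (from_basis_coords :: _ \<Rightarrow> 'a) = distr (distr lborel borel basis_coords) borel from_basis_coords"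
    by (simp add: lborel_distr_basis_coords)
  also have "\<dots> = distr lborel borel (from_basis_coords \<circ> basis_coords)"
    by (simp add: distr_distr borel_measurable_linear linear_basis_coords linear_from_basis_coords)
  also have "\<dots> = lborel"
    by (simp add: comp_def distr_id2)
  finally show ?thesis .
qed

lemma lborel_distr_orthogonal_transformation:
  fixes f :: "'a::euclidean_space \<Rightarrow> 'a"
  assumes f: "orthogonal_transformation f"
  shows "distr lborel borel f = lborel"
proof -
  define g where "g = basis_coords \<circ> f \<circ> from_basis_coords"
  have f_lin: "linear f"
    using f by (rule orthogonal_transformation_linear)
  have "linear g"
    unfolding g_def by (intro linear_compose linear_basis_coords linear_from_basis_coords f_lin)
  then have g: "orthogonal_transformation g"
    using f by (simp add: g_def orthogonal_transformation_def)
  have "f \<circ> from_basis_coords = from_basis_coords \<circ> g"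
    by (auto simp: g_def)
  then have "distr (distr lborel borel from_basis_coords) borel f = distr (distr lborel borel g) borel from_basis_coords"
    using f_lin orthogonal_transformation_linear[OF g]
    by (simp add: distr_distr borel_measurable_linear linear_from_basis_coords)
  then show ?thesis
    by (simp add: lborel_distr_from_basis_coords lborel_distr_orthogonal_transformation_cart[OF g])
qed

lemma adjoint_orthogonal_transformation:
  fixes f :: "'a::euclidean_space \<Rightarrow> 'a"
  assumes f: "orthogonal_transformation f"
  shows "adjoint f = inv f"
proof (rule adjoint_unique, intro allI)
  fix x y
  have "f (inv f y) = y"
    using orthogonal_transformation_surj[OF f] by (rule surj_f_inv_f)
  then have "f x \<bullet> y = f x \<bullet> f (inv f y)"
    by simp
  also have "\<dots> = x \<bullet> inv f y"
    using f by (simp add: orthogonal_transformation_def)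
  finally show "f x \<bullet> y = x \<bullet> inv f y" .
qed

section \<open>Surface measure of the sphere\<close>

lemma nn_integral_lborel_scaleR:
  fixes f :: "'a::euclidean_space \<Rightarrow> ennreal"
  assumes [measurable]: "f \<in> borel_measurable borel" and "0 < c"
  shows "(\<integral>\<^sup>+x. f x \<partial>lborel) = ennreal (c ^ DIM('a)) * (\<integral>\<^sup>+x. f (c *\<^sub>R x) \<partial>lborel)"
  using \<open>0 < c\<close> by (subst lborel_affine[of c 0])
    (simp_all add: nn_integral_density nn_integral_distr nn_integral_cmult)

lemma nn_integral_power_greaterThanLessThan:
  assumes "0 < a"
  shows "(\<integral>\<^sup>+t. ennreal (real (Suc k) * t ^ k) * indicator {0<..<a} t \<partial>lborel) = ennreal (a ^ Suc k)"
proof -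
  have "(\<integral>\<^sup>+t. ennreal (real (Suc k) * t ^ k) * indicator {0<..<a} t \<partial>lborel)
      = (\<integral>\<^sup>+t. ennreal (real (Suc k) * t ^ k) * indicator {0..a} t \<partial>lborel)"
  proof (rule nn_integral_cong_AE)
    show "AE t in lborel. ennreal (real (Suc k) * t ^ k) * indicator {0<..<a} t
        = ennreal (real (Suc k) * t ^ k) * indicator {0..a} t"
      using AE_lborel_singleton[of 0] AE_lborel_singleton[of a]
      by eventually_elim (auto simp: indicator_def)
  qed
  also have "\<dots> = ennreal (a ^ Suc k - 0 ^ Suc k)"
    using \<open>0 < a\<close> DERIV_pow[of "Suc k"] by (intro nn_integral_FTC_Icc[where F = "\<lambda>t. t ^ Suc k"]) auto
  finally show ?thesis by simp
qed

definition japanese_bracket :: "'a::real_normed_vector \<Rightarrow> real"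
  where "japanese_bracket u = norm (u, 1::real)"

lemma japanese_bracket_ge_1: "1 \<le> japanese_bracket u"
  by (simp add: japanese_bracket_def norm_Pair)

lemma japanese_bracket_pos: "0 < japanese_bracket u"
  using japanese_bracket_ge_1[of u] by linarith

lemma japanese_bracket_power2: "japanese_bracket u ^ 2 = 1 + norm u ^ 2"
  by (simp add: japanese_bracket_def norm_Pair)

lemma norm_scaleR_Pair_1: "0 \<le> t \<Longrightarrow> norm (t *\<^sub>R (u, 1::real)) = t * japanese_bracket u"
  unfolding norm_scaleR japanese_bracket_def by simp

lemma borel_measurable_japanese_bracket [measurable]:
  "(japanese_bracket :: 'a::euclidean_space \<Rightarrow> real) \<in> borel_measurable borel"
  unfolding japanese_bracket_def[abs_def] by measurable

lemma tendsto_japanese_bracket_scaleR: "((\<lambda>e. japanese_bracket (e *\<^sub>R v)) \<longlongrightarrow> 1) (at_right 0)"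
proof -
  have "((\<lambda>e. norm (e *\<^sub>R v, 1::real)) \<longlongrightarrow> norm (0 *\<^sub>R v, 1::real)) (at_right 0)"
    by (intro tendsto_intros)
  then show ?thesis by (simp add: japanese_bracket_def)
qed

lemma sets_sphere_measure [simp, measurable_cong]: "sets sphere_measure = sets borel"
  by (simp add: sphere_measure_def)

lemma nn_integral_sphere_measure:
  fixes f :: "'a::euclidean_space \<Rightarrow> ennreal"
  assumes [measurable]: "f \<in> borel_measurable borel"
  shows "(\<integral>\<^sup>+\<theta>. f \<theta> \<partial>sphere_measure)
    = (\<integral>\<^sup>+x. ennreal (real DIM('a)) * indicator (ball 0 1) x * f (sgn x) \<partial>lborel)"
proof -
  have [measurable]: "ball (0::'a) 1 \<in> sets borel"
    by simp
  show ?thesis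
    unfolding sphere_measure_def sgn_div_norm
    by (subst nn_integral_distr, measurable, rule nn_integral_density, measurable)
qed

lemma nn_integral_sphere_measure_orthogonal_transformation:
  fixes f :: "'a::euclidean_space \<Rightarrow> ennreal" and L :: "'a \<Rightarrow> 'a"
  assumes L: "orthogonal_transformation L" and [measurable]: "f \<in> borel_measurable borel"
  shows "(\<integral>\<^sup>+\<theta>. f (L \<theta>) \<partial>sphere_measure) = (\<integral>\<^sup>+\<theta>. f \<theta> \<partial>sphere_measure)"
proof -
  have [measurable]: "L \<in> borel_measurable borel"
    by (rule borel_measurable_linear[OF orthogonal_transformation_linear[OF L]])
  have [measurable]: "ball (0::'a) 1 \<in> sets borel"
    by simp
  define h where "h x = ennreal (real DIM('a)) * indicator (ball 0 1) x * f (sgn x)" for x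
  have h_L: "h (L x) = ennreal (real DIM('a)) * indicator (ball 0 1) x * f (L (sgn x))" for x
    using orthogonal_transformation_norm[OF L] linear_scale[OF orthogonal_transformation_linear[OF L]]
    by (simp add: h_def indicator_def sgn_div_norm)
  have "(\<integral>\<^sup>+\<theta>. f (L \<theta>) \<partial>sphere_measure) = (\<integral>\<^sup>+x. h (L x) \<partial>lborel)"
    unfolding h_L by (rule nn_integral_sphere_measure) measurable
  also have "\<dots> = (\<integral>\<^sup>+x. h x \<partial>distr lborel borel L)"
    by (rule nn_integral_distr[symmetric]) (simp_all add: h_def)
  also have "\<dots> = (\<integral>\<^sup>+\<theta>. f \<theta> \<partial>sphere_measure)"
    unfolding lborel_distr_orthogonal_transformation[OF L] h_def
    by (rule nn_integral_sphere_measure[symmetric]) measurable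
  finally show ?thesis .
qed

lemma nn_integral_ball_slice:
  fixes f :: "'a::euclidean_space \<times> real \<Rightarrow> ennreal"
  assumes [measurable]: "f \<in> borel_measurable borel" and t: "0 < t"
  shows "(\<integral>\<^sup>+x. indicator (ball 0 1) (x, t) * f (sgn (x, t)) \<partial>lborel)
    = (\<integral>\<^sup>+u. ennreal (t ^ DIM('a)) * indicator {..<1 / japanese_bracket u} t * f (sgn (u, 1)) \<partial>lborel)"
proof -
  have [measurable]: "ball (0::'a \<times> real) 1 \<in> sets borel"
    by simp
  have cone: "indicator (ball 0 1) (t *\<^sub>R u, t) * f (sgn (t *\<^sub>R u, t))
      = indicator {..<1 / japanese_bracket u} t * f (sgn (u, 1))" for u
  proof -
    have point: "(t *\<^sub>R u, t) = t *\<^sub>R (u, 1)"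
      by simp
    have "norm (t *\<^sub>R (u, 1::real)) < 1 \<longleftrightarrow> t < 1 / japanese_bracket u"
      unfolding norm_scaleR_Pair_1[OF less_imp_le[OF t]]
      using japanese_bracket_pos[of u] by (simp add: field_simps)
    moreover have "sgn (t *\<^sub>R (u, 1::real)) = sgn (u, 1)"
      unfolding sgn_scaleR using t by simp
    ultimately show ?thesis
      unfolding point by (simp add: indicator_def)
  qed
  have "(\<integral>\<^sup>+x. indicator (ball 0 1) (x, t) * f (sgn (x, t)) \<partial>lborel)
      = ennreal (t ^ DIM('a))
        * (\<integral>\<^sup>+u. indicator (ball 0 1) (t *\<^sub>R u, t) * f (sgn (t *\<^sub>R u, t)) \<partial>lborel)"
    using t by (intro nn_integral_lborel_scaleR) simp_all
  also have "\<dots> = ennreal (t ^ DIM('a))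
      * (\<integral>\<^sup>+u. indicator {..<1 / japanese_bracket u} t * f (sgn (u, 1)) \<partial>lborel)"
    by (simp only: cone)
  also have "\<dots> = (\<integral>\<^sup>+u. ennreal (t ^ DIM('a))
      * (indicator {..<1 / japanese_bracket u} t * f (sgn (u, 1))) \<partial>lborel)"
    by (rule nn_integral_cmult[symmetric]) (simp add: indicator_def, measurable)
  finally show ?thesis
    by (simp only: mult.assoc)
qed

lemma nn_integral_sphere_measure_gnomonic:
  fixes f :: "'a::euclidean_space \<times> real \<Rightarrow> ennreal"
  assumes [measurable]: "f \<in> borel_measurable borel"
    and lower: "\<And>x. snd x \<le> 0 \<Longrightarrow> f x = 0"
  shows "(\<integral>\<^sup>+\<theta>. f \<theta> \<partial>sphere_measure)
    = (\<integral>\<^sup>+u. f (sgn (u, 1)) * ennreal (1 / japanese_bracket u ^ DIM('a \<times> real)) \<partial>lborel)"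
proof -
  let ?n = "DIM('a \<times> real)" and ?d = "DIM('a)"
  have [measurable]: "ball (0::'a \<times> real) 1 \<in> sets borel"
    by simp
  define h where "h z = ennreal (real ?n) * indicator (ball 0 1) z * f (sgn z)" for z
  define G where "G t u = ennreal (real ?n * t ^ ?d) * indicator {0<..<1 / japanese_bracket u} t * f (sgn (u, 1))"
    for t u
  have slice: "(\<integral>\<^sup>+x. h (x, t) \<partial>lborel) = (\<integral>\<^sup>+u. G t u \<partial>lborel)" for t
  proof (cases "0 < t")
    case True
    then show ?thesis
      using nn_integral_ball_slice[of "\<lambda>z. ennreal (real ?n) * f z" t]
      by (simp add: h_def G_def indicator_def ennreal_mult mult_ac)
  next
    case False
    then have "f (sgn (x, t)) = 0" for x
      by (intro lower) (simp add: sgn_div_norm mult_nonneg_nonpos)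
    then show ?thesis
      using False by (simp add: h_def G_def)
  qed
  have radial: "(\<integral>\<^sup>+t. G t u \<partial>lborel) = f (sgn (u, 1)) * ennreal (1 / japanese_bracket u ^ ?n)" for u
  proof -
    have "(\<integral>\<^sup>+t. G t u \<partial>lborel)
        = (\<integral>\<^sup>+t. ennreal (real (Suc ?d) * t ^ ?d) * indicator {0<..<1 / japanese_bracket u} t \<partial>lborel)
          * f (sgn (u, 1))"
      unfolding G_def by (simp add: nn_integral_multc)
    also have "\<dots> = ennreal ((1 / japanese_bracket u) ^ Suc ?d) * f (sgn (u, 1))"
      using japanese_bracket_pos[of u]
      by (simp only: nn_integral_power_greaterThanLessThan divide_pos_pos zero_less_one)
    also have "\<dots> = f (sgn (u, 1)) * ennreal (1 / japanese_bracket u ^ ?n)"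
      by (simp add: power_one_over mult.commute)
    finally show ?thesis .
  qed
  have "(\<integral>\<^sup>+\<theta>. f \<theta> \<partial>sphere_measure) = (\<integral>\<^sup>+z. h z \<partial>(lborel \<Otimes>\<^sub>M lborel))"
    unfolding h_def lborel_prod by (rule nn_integral_sphere_measure) measurable
  also have "\<dots> = (\<integral>\<^sup>+t. (\<integral>\<^sup>+x. h (x, t) \<partial>lborel) \<partial>lborel)"
    by (rule lborel_pair.nn_integral_snd[symmetric]) (unfold lborel_prod h_def, measurable)
  also have "\<dots> = (\<integral>\<^sup>+u. (\<integral>\<^sup>+t. G t u \<partial>lborel) \<partial>lborel)"
    unfolding slice by (rule lborel_pair.Fubini') (simp add: G_def indicator_def, measurable)
  also have "\<dots> = (\<integral>\<^sup>+u. f (sgn (u, 1)) * ennreal (1 / japanese_bracket u ^ ?n) \<partial>lborel)"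
    by (simp only: radial)
  finally show ?thesis .
qed

section \<open>The rescaled bump function\<close>

definition parabolic_chart :: "real \<Rightarrow> 'a::real_normed_vector \<Rightarrow> 'a \<times> real"
  where "parabolic_chart e v
    = (v /\<^sub>R japanese_bracket (e *\<^sub>R v), (1 / japanese_bracket (e *\<^sub>R v) - 1) / e\<^sup>2)"

lemma chi_eps_gnomonic:
  fixes chi :: "'a::euclidean_space \<times> real \<Rightarrow> real"
  assumes "0 < e"
  shows "chi_eps chi e (sgn (e *\<^sub>R v, 1)) = e powr - real DIM('a) * chi (parabolic_chart e v)"
proof -
  let ?N = "japanese_bracket (e *\<^sub>R v)"
  have point: "sgn (e *\<^sub>R v, 1::real) = ((e *\<^sub>R v) /\<^sub>R ?N, 1 / ?N)"
    by (simp add: sgn_div_norm japanese_bracket_def divide_inverse)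
  have rescaled: "((e *\<^sub>R v) /\<^sub>R ?N) /\<^sub>R e = v /\<^sub>R ?N"
    using assms by simp
  show ?thesis
    unfolding point chi_eps_def fst_conv snd_conv rescaled parabolic_chart_def ..
qed

text \<open>Rationalising the second component removes the singular factor \<open>1 / e\<^sup>2\<close>.\<close>

lemma parabolic_chart_eq:
  assumes "e \<noteq> 0"
  shows "parabolic_chart e v = (v /\<^sub>R japanese_bracket (e *\<^sub>R v),
    - (norm v)\<^sup>2 / (japanese_bracket (e *\<^sub>R v) * (1 + japanese_bracket (e *\<^sub>R v))))"
proof -
  let ?N = "japanese_bracket (e *\<^sub>R v)"
  have N: "0 < ?N"
    by (rule japanese_bracket_pos)
  have "(1 / ?N - 1) * (?N * (1 + ?N)) = 1 - ?N\<^sup>2"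
    using N by (simp add: field_simps power2_eq_square)
  also have "\<dots> = - (e\<^sup>2 * (norm v)\<^sup>2)"
    by (simp add: japanese_bracket_power2 power_mult_distrib)
  finally have product: "(1 / ?N - 1) * (?N * (1 + ?N)) = - (e\<^sup>2 * (norm v)\<^sup>2)" .
  have "?N * (1 + ?N) \<noteq> 0"
    using N by auto
  then have "(1 / ?N - 1) / e\<^sup>2 = - (norm v)\<^sup>2 / (?N * (1 + ?N))"
    using assms by (subst frac_eq_eq) (simp_all add: product mult.commute)
  then show ?thesis
    by (simp add: parabolic_chart_def)
qed

lemma tendsto_parabolic_chart: "((\<lambda>e. parabolic_chart e v) \<longlongrightarrow> (v, - (norm v)\<^sup>2 / 2)) (at_right 0)"
proof (rule Lim_transform_eventually)
  let ?N = "\<lambda>e. japanese_bracket (e *\<^sub>R v)"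
  have "((\<lambda>e. (v /\<^sub>R ?N e, - (norm v)\<^sup>2 / (?N e * (1 + ?N e))))
      \<longlongrightarrow> (v /\<^sub>R 1, - (norm v)\<^sup>2 / (1 * (1 + 1)))) (at_right 0)"
    by (intro tendsto_intros tendsto_japanese_bracket_scaleR) simp_all
  then show "((\<lambda>e. (v /\<^sub>R ?N e, - (norm v)\<^sup>2 / (?N e * (1 + ?N e))))
      \<longlongrightarrow> (v, - (norm v)\<^sup>2 / 2)) (at_right 0)"
    by simp
  show "\<forall>\<^sub>F e in at_right 0. (v /\<^sub>R ?N e, - (norm v)\<^sup>2 / (?N e * (1 + ?N e))) = parabolic_chart e v"
    using eventually_at_right_less[of 0] by eventually_elim (simp add: parabolic_chart_eq)
qed

definition chart_density :: "('a::euclidean_space \<times> real \<Rightarrow> real) \<Rightarrow> real \<Rightarrow> 'a \<Rightarrow> real"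
  where "chart_density chi e v
    = chi (parabolic_chart e v) / japanese_bracket (e *\<^sub>R v) ^ DIM('a \<times> real)"

lemma chart_density_eq_chi_eps:
  fixes chi :: "'a::euclidean_space \<times> real \<Rightarrow> real"
  assumes "0 < e"
  shows "chart_density chi e v = e ^ DIM('a)
    * (chi_eps chi e (sgn (e *\<^sub>R v, 1)) * (1 / japanese_bracket (e *\<^sub>R v) ^ DIM('a \<times> real)))"
proof -
  let ?N = "japanese_bracket (e *\<^sub>R v)" and ?d = "DIM('a)"
  have cancel: "e ^ ?d * e powr - real ?d = 1"
    using assms by (simp add: powr_minus powr_realpow)
  have "e ^ ?d * (chi_eps chi e (sgn (e *\<^sub>R v, 1)) * (1 / ?N ^ DIM('a \<times> real)))
      = (e ^ ?d * e powr - real ?d) * (chi (parabolic_chart e v) / ?N ^ DIM('a \<times> real))"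
    unfolding chi_eps_gnomonic[OF assms] by (simp add: mult_ac)
  also have "\<dots> = chart_density chi e v"
    unfolding cancel chart_density_def by simp
  finally show ?thesis
    by (rule sym)
qed

locale bump_function =
  fixes chi :: "'a::euclidean_space \<times> real \<Rightarrow> real"
  assumes continuous: "continuous_on UNIV chi"
    and bounds: "\<And>\<xi>. 0 \<le> chi \<xi> \<and> chi \<xi> \<le> 1"
    and support: "\<And>\<xi>. chi \<xi> \<noteq> 0 \<Longrightarrow> norm \<xi> < 1/2"
begin

lemma borel_measurable_chi [measurable]: "chi \<in> borel_measurable borel"
  using continuous by (rule borel_measurable_continuous_onI)

lemma chi_eps_nonneg: "0 \<le> chi_eps chi e \<theta>"
  by (simp add: chi_eps_def bounds)

lemma chi_eps_le: "chi_eps chi e \<theta> \<le> e powr - real DIM('a)"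
  unfolding chi_eps_def by (intro mult_left_le) (simp_all add: bounds)

lemma chi_eps_eq_0_lower:
  assumes "0 < e" "e \<le> 1" "snd \<theta> \<le> 0"
  shows "chi_eps chi e \<theta> = 0"
proof -
  let ?\<xi> = "(fst \<theta> /\<^sub>R e, (snd \<theta> - 1) / e\<^sup>2)"
  have "e\<^sup>2 \<le> 1"
    using assms by (simp add: power_le_one)
  then have "1 \<le> (1 - snd \<theta>) / e\<^sup>2"
    using assms by (simp add: field_simps)
  also have "\<dots> = \<bar>snd ?\<xi>\<bar>"
    using assms by (simp add: abs_divide)
  also have "\<dots> \<le> norm ?\<xi>"
    using norm_snd_le[of "snd ?\<xi>" "fst ?\<xi>"] by simp
  finally have "\<not> norm ?\<xi> < 1/2"
    by simp
  then have "chi ?\<xi> = 0"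
    using support by blast
  then show ?thesis
    by (simp add: chi_eps_def)
qed

lemma borel_measurable_chi_eps:
  assumes "0 < e"
  shows "chi_eps chi e \<in> borel_measurable borel"
  unfolding chi_eps_def[abs_def] using assms
  by (intro borel_measurable_continuous_onI continuous_intros continuous_on_compose2[OF continuous]) auto

lemma borel_measurable_f_eps:
  assumes "0 < e" "orthogonal_transformation Q"
  shows "f_eps chi e Q \<in> borel_measurable borel"
  unfolding f_eps_def[abs_def]
  using assms by (intro measurable_compose[OF borel_measurable_linear borel_measurable_chi_eps]
      adjoint_linear orthogonal_transformation_linear)

lemma borel_measurable_chart_density [measurable]: "chart_density chi e \<in> borel_measurable borel"
  unfolding chart_density_def[abs_def] parabolic_chart_def
  by (intro borel_measurable_divide measurable_compose[OF _ borel_measurable_chi]) measurable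

lemma chart_density_nonneg: "0 \<le> chart_density chi e v"
  unfolding chart_density_def
  by (intro divide_nonneg_nonneg zero_le_power less_imp_le[OF japanese_bracket_pos]) (simp add: bounds)

lemma chart_density_le_indicator:
  assumes "\<bar>e\<bar> \<le> 1"
  shows "chart_density chi e v \<le> indicator (cball 0 1) v"
proof (cases "chi (parabolic_chart e v) = 0")
  case True
  then show ?thesis
    by (simp add: chart_density_def)
next
  case False
  let ?N = "japanese_bracket (e *\<^sub>R v)"
  have N: "1 \<le> ?N"
    by (rule japanese_bracket_ge_1)
  have "norm (v /\<^sub>R ?N) \<le> norm (parabolic_chart e v)"
    unfolding parabolic_chart_def by (rule norm_fst_le)
  also have "\<dots> < 1/2"
    using False by (rule support)
  finally have "2 * norm v < ?N"
    using N by (simp add: field_simps)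
  then have "(2 * norm v)\<^sup>2 < ?N\<^sup>2"
    by (intro power_strict_mono) auto
  also have "\<dots> = 1 + e\<^sup>2 * (norm v)\<^sup>2"
    by (simp add: japanese_bracket_power2 power_mult_distrib)
  also have "\<dots> \<le> 1 + (norm v)\<^sup>2"
    using assms by (simp add: mult_left_le_one_le power_le_one abs_square_le_1)
  finally have "(norm v)\<^sup>2 < 1"
    by (simp add: power_mult_distrib)
  then have "norm v \<le> 1"
    by (simp add: abs_square_less_1 less_imp_le)
  moreover have "chi (parabolic_chart e v) \<le> ?N ^ DIM('a \<times> real)"
    using bounds[of "parabolic_chart e v"] one_le_power[OF N, of "DIM('a \<times> real)"] by linarith
  then have "chart_density chi e v \<le> 1"
    unfolding chart_density_def using N by (simp add: divide_le_eq)
  ultimately show ?thesis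
    by simp
qed

lemma tendsto_chart_density:
  "((\<lambda>e. chart_density chi e v) \<longlongrightarrow> chi (v, - (norm v)\<^sup>2 / 2)) (at_right 0)"
proof -
  have "((\<lambda>e. chi (parabolic_chart e v)) \<longlongrightarrow> chi (v, - (norm v)\<^sup>2 / 2)) (at_right 0)"
    by (rule continuous_on_tendsto_compose[OF continuous tendsto_parabolic_chart]) simp_all
  then have "((\<lambda>e. chart_density chi e v) \<longlongrightarrow> chi (v, - (norm v)\<^sup>2 / 2) / 1 ^ DIM('a \<times> real)) (at_right 0)"
    unfolding chart_density_def by (intro tendsto_intros tendsto_japanese_bracket_scaleR) simp_all
  then show ?thesis
    by simp
qed

lemma nn_integral_f_eps:
  assumes e: "0 < e" "e \<le> 1" and Q: "orthogonal_transformation Q"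
  shows "(\<integral>\<^sup>+\<theta>. ennreal (f_eps chi e Q \<theta>) \<partial>sphere_measure) = (\<integral>\<^sup>+v. ennreal (chart_density chi e v) \<partial>lborel)"
proof -
  let ?n = "DIM('a \<times> real)" and ?d = "DIM('a)"
  have [measurable]: "chi_eps chi e \<in> borel_measurable borel"
    using e(1) by (rule borel_measurable_chi_eps)
  have adjoint: "orthogonal_transformation (adjoint Q)"
    using Q by (simp add: adjoint_orthogonal_transformation orthogonal_transformation_inv)
  have chart: "ennreal (e ^ ?d) * (ennreal (chi_eps chi e (sgn (e *\<^sub>R v, 1)))
      * ennreal (1 / japanese_bracket (e *\<^sub>R v) ^ ?n)) = ennreal (chart_density chi e v)" for v
  proof -
    have "0 \<le> e ^ ?d" "0 \<le> chi_eps chi e (sgn (e *\<^sub>R v, 1))" "0 \<le> 1 / japanese_bracket (e *\<^sub>R v) ^ ?n"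
      using e chi_eps_nonneg japanese_bracket_pos[of "e *\<^sub>R v"] by simp_all
    then show ?thesis
      by (simp only: chart_density_eq_chi_eps[OF e(1)] ennreal_mult mult_nonneg_nonneg)
  qed
  have "(\<integral>\<^sup>+\<theta>. ennreal (f_eps chi e Q \<theta>) \<partial>sphere_measure) = (\<integral>\<^sup>+\<theta>. ennreal (chi_eps chi e \<theta>) \<partial>sphere_measure)"
    unfolding f_eps_def by (rule nn_integral_sphere_measure_orthogonal_transformation[OF adjoint]) measurable
  also have "\<dots> = (\<integral>\<^sup>+u. ennreal (chi_eps chi e (sgn (u, 1)))
      * ennreal (1 / japanese_bracket u ^ ?n) \<partial>lborel)"
    by (rule nn_integral_sphere_measure_gnomonic) (simp_all add: chi_eps_eq_0_lower e)
  also have "\<dots> = ennreal (e ^ ?d) * (\<integral>\<^sup>+v. ennreal (chi_eps chi e (sgn (e *\<^sub>R v, 1)))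
      * ennreal (1 / japanese_bracket (e *\<^sub>R v) ^ ?n) \<partial>lborel)"
    by (rule nn_integral_lborel_scaleR) (simp_all add: e)
  also have "\<dots> = (\<integral>\<^sup>+v. ennreal (e ^ ?d) * (ennreal (chi_eps chi e (sgn (e *\<^sub>R v, 1)))
      * ennreal (1 / japanese_bracket (e *\<^sub>R v) ^ ?n)) \<partial>lborel)"
    by (rule nn_integral_cmult[symmetric]) measurable
  also have "\<dots> = (\<integral>\<^sup>+v. ennreal (chart_density chi e v) \<partial>lborel)"
    by (simp only: chart)
  finally show ?thesis .
qed

lemma integral_abs_f_eps:
  assumes "0 < e" "e \<le> 1" "orthogonal_transformation Q"
  shows "integral\<^sup>L sphere_measure (\<lambda>\<theta>. \<bar>f_eps chi e Q \<theta>\<bar>) = integral\<^sup>L lborel (chart_density chi e)"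
proof -
  have [measurable]: "f_eps chi e Q \<in> borel_measurable borel"
    using assms by (intro borel_measurable_f_eps)
  have "\<bar>f_eps chi e Q \<theta>\<bar> = f_eps chi e Q \<theta>" for \<theta>
    by (simp add: f_eps_def chi_eps_nonneg)
  then have "integral\<^sup>L sphere_measure (\<lambda>\<theta>. \<bar>f_eps chi e Q \<theta>\<bar>) = integral\<^sup>L sphere_measure (f_eps chi e Q)"
    by simp
  also have "\<dots> = enn2real (\<integral>\<^sup>+\<theta>. ennreal (f_eps chi e Q \<theta>) \<partial>sphere_measure)"
    by (rule integral_eq_nn_integral) (simp_all add: f_eps_def chi_eps_nonneg)
  also have "\<dots> = enn2real (\<integral>\<^sup>+v. ennreal (chart_density chi e v) \<partial>lborel)"
    by (simp add: nn_integral_f_eps assms)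
  also have "\<dots> = integral\<^sup>L lborel (chart_density chi e)"
    by (rule integral_eq_nn_integral[symmetric]) (simp_all add: chart_density_nonneg)
  finally show ?thesis .
qed

lemma tendsto_integral_chart_density:
  "((\<lambda>e. integral\<^sup>L lborel (chart_density chi e)) \<longlongrightarrow> integral\<^sup>L lborel (\<lambda>\<eta>. chi (\<eta>, - (norm \<eta>)\<^sup>2 / 2)))
    (at_right 0)"
proof (rule tendsto_at_right_sequentially[where b = 1])
  fix s :: "nat \<Rightarrow> real"
  assume pos: "\<And>n. 0 < s n" and less_1: "\<And>n. s n < 1" and "s \<longlonglongrightarrow> 0"
  then have s: "filterlim s (at_right 0) sequentially"
    by (auto simp: filterlim_at intro!: always_eventually less_imp_neq[symmetric])
  show "(\<lambda>n. integral\<^sup>L lborel (chart_density chi (s n)))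
      \<longlonglongrightarrow> integral\<^sup>L lborel (\<lambda>\<eta>. chi (\<eta>, - (norm \<eta>)\<^sup>2 / 2))"
  proof (rule integral_dominated_convergence[where w = "indicator (cball 0 1)"])
    show "(\<lambda>\<eta>. chi (\<eta>, - (norm \<eta>)\<^sup>2 / 2)) \<in> borel_measurable lborel"
      by measurable
    show "integrable lborel (indicator (cball (0::'a) 1) :: 'a \<Rightarrow> real)"
      by (intro integrable_real_indicator emeasure_lborel_cball_finite) simp
    show "AE v in lborel. (\<lambda>n. chart_density chi (s n) v) \<longlonglongrightarrow> chi (v, - (norm v)\<^sup>2 / 2)"
      by (intro AE_I2 filterlim_compose[OF tendsto_chart_density s])
    show "AE v in lborel. norm (chart_density chi (s n) v) \<le> indicator (cball 0 1) v" for n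
      using pos[of n] less_1[of n] chart_density_nonneg[of "s n"] chart_density_le_indicator[of "s n"]
      by (intro AE_I2) simp
  qed simp
qed simp

lemma nn_integral_f_eps_le:
  assumes "0 < e" "e \<le> 1" "orthogonal_transformation Q"
  shows "(\<integral>\<^sup>+\<theta>. ennreal (f_eps chi e Q \<theta>) \<partial>sphere_measure) \<le> emeasure lborel (cball (0::'a) 1)"
proof -
  have "ennreal (chart_density chi e v) \<le> indicator (cball 0 1) v" for v
    using assms chart_density_le_indicator[of e v]
    by (cases "v \<in> cball 0 1") (auto simp: indicator_def ennreal_eq_0_iff intro: ennreal_leI)
  then have "(\<integral>\<^sup>+v. ennreal (chart_density chi e v) \<partial>lborel) \<le> (\<integral>\<^sup>+v. indicator (cball (0::'a) 1) v \<partial>lborel)"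
    by (intro nn_integral_mono)
  then show ?thesis
    by (simp add: nn_integral_f_eps assms)
qed

lemma integral_square_f_eps_le:
  assumes e: "0 < e" "e \<le> 1" and Q: "orthogonal_transformation Q"
  shows "integral\<^sup>L sphere_measure (\<lambda>\<theta>. (f_eps chi e Q \<theta>)\<^sup>2)
    \<le> e powr - real DIM('a) * measure lborel (cball (0::'a) 1)"
proof -
  let ?c = "e powr - real DIM('a)" and ?B = "cball (0::'a) 1"
  have [measurable]: "f_eps chi e Q \<in> borel_measurable borel"
    using e Q by (intro borel_measurable_f_eps)
  have B: "emeasure lborel ?B = ennreal (measure lborel ?B)"
    using emeasure_lborel_cball_finite[of "0::'a" 1]
    by (intro emeasure_eq_ennreal_measure) (simp add: less_top)
  have square_le: "(f_eps chi e Q \<theta>)\<^sup>2 \<le> ?c * f_eps chi e Q \<theta>" for \<theta>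
    unfolding power2_eq_square f_eps_def by (intro mult_right_mono chi_eps_le chi_eps_nonneg)
  have "(\<integral>\<^sup>+\<theta>. ennreal ((f_eps chi e Q \<theta>)\<^sup>2) \<partial>sphere_measure)
      \<le> (\<integral>\<^sup>+\<theta>. ennreal ?c * ennreal (f_eps chi e Q \<theta>) \<partial>sphere_measure)"
  proof (intro nn_integral_mono)
    fix \<theta>
    have "ennreal ?c * ennreal (f_eps chi e Q \<theta>) = ennreal (?c * f_eps chi e Q \<theta>)"
      by (rule ennreal_mult'[symmetric]) simp
    then show "ennreal ((f_eps chi e Q \<theta>)\<^sup>2) \<le> ennreal ?c * ennreal (f_eps chi e Q \<theta>)"
      using ennreal_leI[OF square_le] by simp
  qed
  also have "\<dots> = ennreal ?c * (\<integral>\<^sup>+\<theta>. ennreal (f_eps chi e Q \<theta>) \<partial>sphere_measure)"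
    by (rule nn_integral_cmult) measurable
  also have "\<dots> \<le> ennreal ?c * emeasure lborel ?B"
    by (intro mult_left_mono nn_integral_f_eps_le e Q) simp
  finally show ?thesis
    by (subst integral_eq_nn_integral) (auto simp: B ennreal_mult[symmetric] intro!: enn2real_leI)
qed

lemma L2_norm_f_eps_le:
  assumes e: "0 < e" "e \<le> 1" and Q: "orthogonal_transformation Q"
  shows "sqrt (integral\<^sup>L sphere_measure (\<lambda>\<theta>. (f_eps chi e Q \<theta>)\<^sup>2))
    \<le> sqrt (measure lborel (cball (0::'a) 1)) * e powr (- real DIM('a) / 2)"
proof -
  have "sqrt (integral\<^sup>L sphere_measure (\<lambda>\<theta>. (f_eps chi e Q \<theta>)\<^sup>2))
      \<le> sqrt (e powr - real DIM('a) * measure lborel (cball (0::'a) 1))"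
    by (rule real_sqrt_le_mono[OF integral_square_f_eps_le[OF e Q]])
  also have "\<dots> = sqrt (measure lborel (cball (0::'a) 1)) * e powr (- real DIM('a) / 2)"
  proof -
    have "sqrt (e powr - real DIM('a)) = e powr (- real DIM('a) / 2)"
      by (rule powr_half_sqrt_powr[symmetric]) (use e in simp)
    then show ?thesis
      by (simp only: real_sqrt_mult mult.commute)
  qed
  finally show ?thesis .
qed

lemma tendsto_integral_abs_f_eps:
  assumes "orthogonal_transformation Q"
  shows "((\<lambda>e. integral\<^sup>L sphere_measure (\<lambda>\<theta>. \<bar>f_eps chi e Q \<theta>\<bar>))
    \<longlongrightarrow> integral\<^sup>L lborel (\<lambda>\<eta>. chi (\<eta>, - (norm \<eta>)\<^sup>2 / 2))) (at_right 0)"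
proof (rule Lim_transform_eventually[OF tendsto_integral_chart_density])
  show "\<forall>\<^sub>F e in at_right 0.
      integral\<^sup>L lborel (chart_density chi e) = integral\<^sup>L sphere_measure (\<lambda>\<theta>. \<bar>f_eps chi e Q \<theta>\<bar>)"
    by (rule eventually_at_rightI[of 0 1]) (simp_all add: integral_abs_f_eps assms)
qed

lemma L2_norm_f_eps_uniform_bound:
  "\<exists>C>0. \<forall>e\<in>{0<..1}. \<forall>Q. orthogonal_transformation Q \<longrightarrow>
    sqrt (integral\<^sup>L sphere_measure (\<lambda>\<theta>. (f_eps chi e Q \<theta>)\<^sup>2)) \<le> C * e powr (- real DIM('a) / 2)"
proof (intro exI[of _ "sqrt (measure lborel (cball (0::'a) 1))"] conjI ballI allI impI)
  show "0 < sqrt (measure lborel (cball (0::'a) 1))"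
    by simp
  fix e :: real and Q :: "'a \<times> real \<Rightarrow> 'a \<times> real"
  assume e: "e \<in> {0<..1}" and Q: "orthogonal_transformation Q"
  show "sqrt (integral\<^sup>L sphere_measure (\<lambda>\<theta>. (f_eps chi e Q \<theta>)\<^sup>2))
      \<le> sqrt (measure lborel (cball (0::'a) 1)) * e powr (- real DIM('a) / 2)"
    by (rule L2_norm_f_eps_le) (use e Q in auto)
qed

end

lemma bump_function_of_smooth:
  fixes chi :: "'a::euclidean_space \<times> real \<Rightarrow> real"
  assumes "smooth_fun chi"
    and "\<And>\<xi>. 0 \<le> chi \<xi> \<and> chi \<xi> \<le> 1"
    and "closure {\<xi>. chi \<xi> \<noteq> 0} \<subseteq> ball 0 (1/2)"
  shows "bump_function chi"
proof (rule bump_function.intro)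
  have "Ck 0 chi"
    using assms(1) unfolding smooth_fun_def by blast
  then show "continuous_on UNIV chi"
    by simp
  show "0 \<le> chi \<xi> \<and> chi \<xi> \<le> 1" for \<xi>
    by (rule assms(2))
  show "norm \<xi> < 1/2" if "chi \<xi> \<noteq> 0" for \<xi>
  proof -
    have "\<xi> \<in> ball 0 (1/2)"
      by (rule assms(3)[THEN subsetD, OF closure_subset[THEN subsetD]]) (simp add: that)
    then show ?thesis
      by simp
  qed
qed

theorem lemma4p1:
  fixes chi :: "'a::euclidean_space \<times> real \<Rightarrow> real"
  assumes smooth: "smooth_fun chi"
    and bounds: "\<And>xi. 0 \<le> chi xi \<and> chi xi \<le> 1"
    and supp: "closure {xi. chi xi \<noteq> 0} \<subseteq> ball 0 (1/2)"
  shows "(\<forall>Q. orthogonal_transformation Q \<longrightarrow>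
           ((\<lambda>eps. integral\<^sup>L sphere_measure (\<lambda>th. \<bar>f_eps chi eps Q th\<bar>))
              \<longlongrightarrow> integral\<^sup>L lborel (\<lambda>eta::'a. chi (eta, - (norm eta)\<^sup>2 / 2))) (at_right 0))
       \<and> (\<exists>C>0. \<forall>eps\<in>{0<..1}. \<forall>Q. orthogonal_transformation Q \<longrightarrow>
           sqrt (integral\<^sup>L sphere_measure (\<lambda>th. (f_eps chi eps Q th)\<^sup>2))
             \<le> C * eps powr (- real DIM('a) / 2))"
proof -
  interpret bump_function chi
    by (rule bump_function_of_smooth[OF smooth bounds supp])
  show ?thesis
    using tendsto_integral_abs_f_eps L2_norm_f_eps_uniform_bound by blast
qed

end
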